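(* For $n \ge 3$, the commutator subgroup $TW_n'$ is generated by the elements $$w\,(\tau_j\tau_{j+1}\tau_j\tau_{j+1})\,w^{-1} \quad\text{and}\quad w\,(\tau_{j+1}\tau_j\tau_{j+1}\tau_j)\,w^{-1},$$ where $j$ ranges over $\{1,2,\dots,n-2\}$ and $w$ ranges over all products $w=\tau_{i_1}\tau_{i_2}\cdots\tau_{i_s}$ with $s\ge 0$ and $1 \le i_1 < i_2 < \dots < i_s < j$ (the empty product $w=1$ included).
   Context: For $n \ge 2$, the twin group $TW_n$ is the group with generators $\tau_1,\dots,\tau_{n-1}$ and defining relations $\tau_i^2=1$ for all $i$, and $\tau_i\tau_j=\tau_j\tau_i$ whenever $|i-j|>1$. $G'$ denotes the commutator subgroup of a group $G$. *)

theory Defs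
  imports "HOL-Algebra.Algebra"
begin

text \<open>The twin group TW_n, constructed from its presentation: generators tau_1..tau_(n-1),
  relations tau_i^2 = 1 and tau_i tau_j = tau_j tau_i for |i-j|>1.
  Words are lists of generator indices in {1..n-1}; since every generator is an
  involution, positive words suffice.\<close>

definition tw_words :: "nat \<Rightarrow> nat list set" where
  "tw_words n = {w. set w \<subseteq> {1..<n}}"

definition tw_step :: "nat \<Rightarrow> (nat list \<times> nat list) set" where
  "tw_step n =
     {(u @ [i, i] @ v, u @ v) | u v i. set u \<subseteq> {1..<n} \<and> set v \<subseteq> {1..<n} \<and> i \<in> {1..<n}}
   \<union> {(u @ [i, j] @ v, u @ [j, i] @ v) | u v i j.
        set u \<subseteq> {1..<n} \<and> set v \<subseteq> {1..<n} \<and> i \<in> {1..<n} \<and> j \<in> {1..<n}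
        \<and> (i + 1 < j \<or> j + 1 < i)}"

definition tw_eq :: "nat \<Rightarrow> (nat list \<times> nat list) set" where
  "tw_eq n = (tw_step n \<union> (tw_step n)\<inverse>)\<^sup>* \<inter> (tw_words n \<times> tw_words n)"

definition TW :: "nat \<Rightarrow> nat list set monoid" where
  "TW n = \<lparr> carrier = tw_words n // tw_eq n,
            monoid.mult = (\<lambda>A B. \<Union>a\<in>A. \<Union>b\<in>B. tw_eq n `` {a @ b}),
            monoid.one = tw_eq n `` {[]} \<rparr>"

definition tau :: "nat \<Rightarrow> nat \<Rightarrow> nat list set" where
  "tau n i = tw_eq n `` {[i]}"

definition tw_prod :: "nat \<Rightarrow> nat list \<Rightarrow> nat list set" where
  "tw_prod n is = foldr (\<lambda>i x. tau n i \<otimes>\<^bsub>TW n\<^esub> x) is \<one>\<^bsub>TW n\<^esub>"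

end

theory Submission
  imports Defs
begin

text \<open>
  Let H be the subgroup generated by the listed elements. Each of them is a conjugate of a
  commutator, so H lies in the commutator subgroup. Conversely, H contains the commutator of any
  two generators (it is trivial unless the indices are adjacent, and then it is listed with
  w = 1), and a normal subgroup containing all commutators of generators contains the whole
  commutator subgroup; so it remains to show that H is normal, i.e. closed under conjugation by
  each tau_k. For k > j, tau_k commutes with w and turns the middle commutator into a listed
  element (k = j + 1 or k \<ge> j + 3) or into a product of three listed ones (k = j + 2). For
  k \<le> j, tau_k is moved through the increasing word w to its sorted position; the only
  non-trivial move is tau_k tau_(k-1) = [tau_k, tau_(k-1)] tau_(k-1) tau_k, and the commutator
  factor, conjugated by the prefix of w, is again a listed element.
\<close>

lemma (in group) inv_m_cancel_left [simp]:
  "x \<in> carrier G \<Longrightarrow> y \<in> carrier G \<Longrightarrow> inv x \<otimes> (x \<otimes> y) = y"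
  by (simp add: m_assoc [symmetric])

lemma (in group) m_inv_cancel_left [simp]:
  "x \<in> carrier G \<Longrightarrow> y \<in> carrier G \<Longrightarrow> x \<otimes> (inv x \<otimes> y) = y"
  by (simp add: m_assoc [symmetric])

lemma (in group) commutator_in_normal_generate_left:
  assumes N: "N \<lhd> G" and A: "A \<subseteq> carrier G" and y: "y \<in> carrier G"
    and gens: "\<And>a. a \<in> A \<Longrightarrow> a \<otimes> y \<otimes> inv a \<otimes> inv y \<in> N"
    and x: "x \<in> generate G A"
  shows "x \<otimes> y \<otimes> inv x \<otimes> inv y \<in> N"
proof -
  interpret N: normal N G by (rule N)
  show ?thesis
    using x
  proof (induction rule: generate.induct)
    case one
    show ?case using y by simp
  next
    case (incl a)
    then show ?case by (rule gens)
  next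
    case (inv a)
    have a: "a \<in> carrier G" using inv A by blast
    have "inv a \<otimes> y \<otimes> inv (inv a) \<otimes> inv y = inv a \<otimes> inv (a \<otimes> y \<otimes> inv a \<otimes> inv y) \<otimes> a"
      using a y by (simp add: inv_mult_group m_assoc)
    then show ?case
      using N.inv_op_closed1 N.m_inv_closed gens[OF inv] a by simp
  next
    case (eng x1 x2)
    have x: "x1 \<in> carrier G" "x2 \<in> carrier G"
      using eng.hyps generate_in_carrier[OF A] by auto
    have "x1 \<otimes> x2 \<otimes> y \<otimes> inv (x1 \<otimes> x2) \<otimes> inv y
        = (x1 \<otimes> (x2 \<otimes> y \<otimes> inv x2 \<otimes> inv y) \<otimes> inv x1) \<otimes> (x1 \<otimes> y \<otimes> inv x1 \<otimes> inv y)"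
      using x y by (simp add: inv_mult_group m_assoc)
    then show ?case
      using eng.IH N.inv_op_closed2 x by simp
  qed
qed

lemma (in group) derived_subset_normal_of_generators:
  assumes N: "N \<lhd> G" and A: "A \<subseteq> carrier G" and gen: "carrier G = generate G A"
    and comm: "\<And>a b. a \<in> A \<Longrightarrow> b \<in> A \<Longrightarrow> a \<otimes> b \<otimes> inv a \<otimes> inv b \<in> N"
  shows "derived G (carrier G) \<subseteq> N"
  unfolding derived_def
proof (rule generate_subgroup_incl[OF _ normal.axioms(1)[OF N]], safe)
  fix x y assume x: "x \<in> carrier G" and y: "y \<in> carrier G"
  have "a \<otimes> y \<otimes> inv a \<otimes> inv y \<in> N" if a: "a \<in> A" for a
  proof -
    have "y \<otimes> a \<otimes> inv y \<otimes> inv a \<in> N"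
      using commutator_in_normal_generate_left[OF N A] comm a A y gen by blast
    moreover have "a \<otimes> y \<otimes> inv a \<otimes> inv y = inv (y \<otimes> a \<otimes> inv y \<otimes> inv a)"
      using a A y by (auto simp: inv_mult_group m_assoc)
    ultimately show ?thesis using normal.axioms(1)[OF N] subgroup.m_inv_closed by fastforce
  qed
  then show "x \<otimes> y \<otimes> inv x \<otimes> inv y \<in> N"
    using commutator_in_normal_generate_left[OF N A y] x gen by blast
qed

lemma (in group) normal_generate_by_conjugation:
  assumes S: "S \<subseteq> carrier G" and A: "A \<subseteq> carrier G" and gen: "carrier G = generate G A"
    and inv_A: "\<And>a. a \<in> A \<Longrightarrow> inv a \<in> A"
    and conj: "\<And>a s. a \<in> A \<Longrightarrow> s \<in> S \<Longrightarrow> a \<otimes> s \<otimes> inv a \<in> generate G S"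
  shows "generate G S \<lhd> G"
proof -
  have conj_gen: "a \<otimes> h \<otimes> inv a \<in> generate G S" if a: "a \<in> A" and h: "h \<in> generate G S" for a h
    using h
  proof (induction rule: generate.induct)
    case one
    have "a \<in> carrier G" using a A by blast
    then show ?case by (simp add: generate.one)
  next
    case (incl s)
    then show ?case by (rule conj[OF a])
  next
    case (inv s)
    have "a \<in> carrier G" "s \<in> carrier G" using a A inv S by auto
    then have "a \<otimes> inv s \<otimes> inv a = inv (a \<otimes> s \<otimes> inv a)"
      by (simp add: inv_mult_group m_assoc)
    then show ?case using generate_m_inv_closed[OF S conj[OF a inv]] by simp
  next
    case (eng h1 h2)
    have "h1 \<in> carrier G" "h2 \<in> carrier G" "a \<in> carrier G"
      using eng.hyps generate_in_carrier[OF S] a A by auto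
    then have "a \<otimes> (h1 \<otimes> h2) \<otimes> inv a = (a \<otimes> h1 \<otimes> inv a) \<otimes> (a \<otimes> h2 \<otimes> inv a)"
      by (simp add: m_assoc)
    then show ?case using eng.IH by (auto intro: generate.eng)
  qed
  have "g \<otimes> h \<otimes> inv g \<in> generate G S" if g: "g \<in> generate G A" and h: "h \<in> generate G S" for g h
    using g h
  proof (induction arbitrary: h rule: generate.induct)
    case one
    then show ?case using generate_in_carrier[OF S] by auto
  next
    case (incl a)
    then show ?case using conj_gen by blast
  next
    case (inv a)
    then show ?case using conj_gen[OF inv_A] A by auto
  next
    case (eng g1 g2)
    have "g1 \<in> carrier G" "g2 \<in> carrier G" "h \<in> carrier G"
      using eng generate_in_carrier[OF S] generate_in_carrier[OF A] by auto
    then have "g1 \<otimes> g2 \<otimes> h \<otimes> inv (g1 \<otimes> g2) = g1 \<otimes> (g2 \<otimes> h \<otimes> inv g2) \<otimes> inv g1"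
      by (simp add: inv_mult_group m_assoc)
    then show ?case using eng by simp
  qed
  then show ?thesis
    unfolding normal_inv_iff using generate_is_subgroup[OF S] gen by blast
qed

lemma (in group) conj_conj:
  "x \<in> carrier G \<Longrightarrow> y \<in> carrier G \<Longrightarrow> c \<in> carrier G \<Longrightarrow>
   x \<otimes> (y \<otimes> c \<otimes> inv y) \<otimes> inv x = (x \<otimes> y) \<otimes> c \<otimes> inv (x \<otimes> y)"
  by (simp add: inv_mult_group m_assoc)

lemma (in group) conj_mult3:
  "x \<in> carrier G \<Longrightarrow> a \<in> carrier G \<Longrightarrow> b \<in> carrier G \<Longrightarrow> c \<in> carrier G \<Longrightarrow>
   x \<otimes> (a \<otimes> b \<otimes> c) \<otimes> inv x = (x \<otimes> a \<otimes> inv x) \<otimes> (x \<otimes> b \<otimes> inv x) \<otimes> (x \<otimes> c \<otimes> inv x)"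
  by (simp add: m_assoc)

lemma (in group) commutator_in_derived:
  "x \<in> carrier G \<Longrightarrow> y \<in> carrier G \<Longrightarrow> x \<otimes> y \<otimes> inv x \<otimes> inv y \<in> derived G (carrier G)"
  unfolding derived_def by (rule generate.incl) blast

abbreviation tw_class :: "nat \<Rightarrow> nat list \<Rightarrow> nat list set" where
  "tw_class n w \<equiv> tw_eq n `` {w}"

lemma tw_step_cancel:
  "set u \<subseteq> {1..<n} \<Longrightarrow> set v \<subseteq> {1..<n} \<Longrightarrow> i \<in> {1..<n} \<Longrightarrow>
   (u @ [i, i] @ v, u @ v) \<in> tw_step n"
  unfolding tw_step_def by (intro UnI1 CollectI exI[of _ u] exI[of _ v] exI[of _ i]) auto

lemma tw_step_swap:
  "set u \<subseteq> {1..<n} \<Longrightarrow> set v \<subseteq> {1..<n} \<Longrightarrow> i \<in> {1..<n} \<Longrightarrow> j \<in> {1..<n} \<Longrightarrow>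
   i + 1 < j \<or> j + 1 < i \<Longrightarrow> (u @ [i, j] @ v, u @ [j, i] @ v) \<in> tw_step n"
  unfolding tw_step_def
  by (intro UnI2 CollectI exI[of _ u] exI[of _ v] exI[of _ i] exI[of _ j] conjI refl)

lemma tw_step_append:
  assumes "(x, y) \<in> tw_step n" "set u \<subseteq> {1..<n}" "set v \<subseteq> {1..<n}"
  shows "(u @ x @ v, u @ y @ v) \<in> tw_step n"
proof -
  from assms(1) consider
    (cancel) u' v' i where "x = u' @ [i, i] @ v'" "y = u' @ v'"
      "set u' \<subseteq> {1..<n}" "set v' \<subseteq> {1..<n}" "i \<in> {1..<n}"
  | (swap) u' v' i j where "x = u' @ [i, j] @ v'" "y = u' @ [j, i] @ v'"
      "set u' \<subseteq> {1..<n}" "set v' \<subseteq> {1..<n}" "i \<in> {1..<n}" "j \<in> {1..<n}"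
      "i + 1 < j \<or> j + 1 < i"
    unfolding tw_step_def by blast
  then show ?thesis
  proof cases
    case cancel
    then show ?thesis using assms(2,3) tw_step_cancel[of "u @ u'" n "v' @ v" i] by simp
  next
    case swap
    then show ?thesis using assms(2,3) tw_step_swap[of "u @ u'" n "v' @ v" i j] by simp
  qed
qed

lemma tw_steps_append:
  assumes "(x, y) \<in> (tw_step n \<union> (tw_step n)\<inverse>)\<^sup>*" "set u \<subseteq> {1..<n}" "set v \<subseteq> {1..<n}"
  shows "(u @ x @ v, u @ y @ v) \<in> (tw_step n \<union> (tw_step n)\<inverse>)\<^sup>*"
  using assms(1)
proof (induction rule: rtrancl_induct)
  case (step y z)
  then have "(u @ y @ v, u @ z @ v) \<in> tw_step n \<union> (tw_step n)\<inverse>"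
    using tw_step_append[OF _ assms(2,3)] by blast
  with step.IH show ?case by (rule rtrancl_into_rtrancl)
qed simp

lemma equiv_tw_eq: "equiv (tw_words n) (tw_eq n)"
proof (rule equivI)
  show "tw_eq n \<subseteq> tw_words n \<times> tw_words n" unfolding tw_eq_def by blast
  show "refl_on (tw_words n) (tw_eq n)" unfolding refl_on_def tw_eq_def by auto
  have "((tw_step n \<union> (tw_step n)\<inverse>)\<^sup>*)\<inverse> = (tw_step n \<union> (tw_step n)\<inverse>)\<^sup>*"
    by (simp add: rtrancl_converse [symmetric] converse_Un Un_commute)
  then show "sym (tw_eq n)" unfolding sym_def tw_eq_def by blast
  show "trans (tw_eq n)" unfolding trans_def tw_eq_def by auto
qed

lemma tw_eq_step: "(x, y) \<in> tw_step n \<Longrightarrow> set x \<subseteq> {1..<n} \<Longrightarrow> set y \<subseteq> {1..<n} \<Longrightarrow> (x, y) \<in> tw_eq n"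
  unfolding tw_eq_def tw_words_def by auto

lemma tw_eq_append:
  assumes "(a, b) \<in> tw_eq n" "(c, d) \<in> tw_eq n"
  shows "(a @ c, b @ d) \<in> tw_eq n"
proof -
  have words: "set a \<subseteq> {1..<n}" "set b \<subseteq> {1..<n}" "set c \<subseteq> {1..<n}" "set d \<subseteq> {1..<n}"
    using assms unfolding tw_eq_def tw_words_def by auto
  have "(a @ c, b @ c) \<in> (tw_step n \<union> (tw_step n)\<inverse>)\<^sup>*"
    using tw_steps_append[of a b n "[]" c] assms(1) words unfolding tw_eq_def by auto
  moreover have "(b @ c, b @ d) \<in> (tw_step n \<union> (tw_step n)\<inverse>)\<^sup>*"
    using tw_steps_append[of c d n b "[]"] assms(2) words unfolding tw_eq_def by auto
  ultimately show ?thesis using words unfolding tw_eq_def tw_words_def by auto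
qed

lemma tw_eq_rev_append: "w \<in> tw_words n \<Longrightarrow> (rev w @ w, []) \<in> tw_eq n"
proof (induction w)
  case Nil
  then show ?case using equiv_tw_eq[of n] unfolding equiv_def refl_on_def tw_words_def by auto
next
  case (Cons i w)
  then have w: "w \<in> tw_words n" and i: "i \<in> {1..<n}" unfolding tw_words_def by auto
  have "(rev w @ [i, i] @ w, rev w @ w) \<in> tw_step n"
    using w i unfolding tw_words_def by (intro tw_step_cancel) auto
  then have "(rev (i # w) @ i # w, rev w @ w) \<in> tw_eq n"
    using w i by (intro tw_eq_step) (auto simp: tw_words_def)
  with Cons.IH[OF w] show ?case using equiv_tw_eq[of n] unfolding equiv_def by (metis transD)
qed

lemma TW_carrier: "carrier (TW n) = tw_class n ` tw_words n"
  unfolding TW_def quotient_def by auto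

lemma TW_one: "\<one>\<^bsub>TW n\<^esub> = tw_class n []"
  unfolding TW_def by simp

lemma TW_mult:
  assumes "a \<in> tw_words n" "b \<in> tw_words n"
  shows "tw_class n a \<otimes>\<^bsub>TW n\<^esub> tw_class n b = tw_class n (a @ b)"
proof -
  have "tw_class n (a' @ b') = tw_class n (a @ b)"
    if "a' \<in> tw_class n a" "b' \<in> tw_class n b" for a' b'
  proof -
    from that have "(a @ b, a' @ b') \<in> tw_eq n" using tw_eq_append by blast
    then show ?thesis using equiv_class_eq[OF equiv_tw_eq] by metis
  qed
  then have "(\<Union>a'\<in>tw_class n a. \<Union>b'\<in>tw_class n b. tw_class n (a' @ b'))
      = (\<Union>a'\<in>tw_class n a. \<Union>b'\<in>tw_class n b. tw_class n (a @ b))"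
    by (intro SUP_cong refl) auto
  also have "\<dots> = tw_class n (a @ b)"
    using assms equiv_class_self[OF equiv_tw_eq] by blast
  finally show ?thesis unfolding TW_def by simp
qed

lemma group_TW: "group (TW n)"
proof (rule groupI)
  fix x y assume "x \<in> carrier (TW n)" "y \<in> carrier (TW n)"
  then show "x \<otimes>\<^bsub>TW n\<^esub> y \<in> carrier (TW n)"
    unfolding TW_carrier by (auto simp: TW_mult tw_words_def)
next
  show "\<one>\<^bsub>TW n\<^esub> \<in> carrier (TW n)"
    unfolding TW_carrier TW_one tw_words_def by auto
next
  fix x y z assume "x \<in> carrier (TW n)" "y \<in> carrier (TW n)" "z \<in> carrier (TW n)"
  then show "x \<otimes>\<^bsub>TW n\<^esub> y \<otimes>\<^bsub>TW n\<^esub> z = x \<otimes>\<^bsub>TW n\<^esub> (y \<otimes>\<^bsub>TW n\<^esub> z)"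
    unfolding TW_carrier by (auto simp: TW_mult tw_words_def)
next
  fix x assume "x \<in> carrier (TW n)"
  then show "\<one>\<^bsub>TW n\<^esub> \<otimes>\<^bsub>TW n\<^esub> x = x"
    unfolding TW_carrier TW_one by (auto simp: TW_mult tw_words_def)
next
  fix x assume "x \<in> carrier (TW n)"
  then obtain w where x: "x = tw_class n w" and w: "w \<in> tw_words n"
    unfolding TW_carrier by blast
  have rev_w: "rev w \<in> tw_words n" using w unfolding tw_words_def by auto
  have "tw_class n (rev w) \<otimes>\<^bsub>TW n\<^esub> x = \<one>\<^bsub>TW n\<^esub>"
    using tw_eq_rev_append[OF w] equiv_class_eq[OF equiv_tw_eq]
    by (simp add: x TW_one TW_mult[OF rev_w w])
  with rev_w show "\<exists>y\<in>carrier (TW n). y \<otimes>\<^bsub>TW n\<^esub> x = \<one>\<^bsub>TW n\<^esub>"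
    unfolding TW_carrier by blast
qed

lemma tw_prod_eq_class: "w \<in> tw_words n \<Longrightarrow> tw_prod n w = tw_class n w"
proof (induction w)
  case Nil
  then show ?case unfolding tw_prod_def TW_one by simp
next
  case (Cons i w)
  then have "w \<in> tw_words n" "[i] \<in> tw_words n" unfolding tw_words_def by auto
  with Cons.IH show ?case using TW_mult[of "[i]" n w] unfolding tw_prod_def tau_def by simp
qed

lemma tau_closed: "i \<in> {1..<n} \<Longrightarrow> tau n i \<in> carrier (TW n)"
  unfolding tau_def TW_carrier tw_words_def by auto

lemma tau_involution: "i \<in> {1..<n} \<Longrightarrow> tau n i \<otimes>\<^bsub>TW n\<^esub> tau n i = \<one>\<^bsub>TW n\<^esub>"
proof -
  assume i: "i \<in> {1..<n}"
  have "([] @ [i, i] @ [], [] @ []) \<in> tw_step n"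
    using i by (intro tw_step_cancel) auto
  then have "([i, i], []) \<in> tw_eq n" using i by (intro tw_eq_step) auto
  then show ?thesis
    using i equiv_class_eq[OF equiv_tw_eq] unfolding tau_def TW_one
    by (subst TW_mult) (auto simp: tw_words_def)
qed

lemma tau_far_comm:
  assumes "1 \<le> i" "i + 1 < j" "j < n"
  shows "tau n j \<otimes>\<^bsub>TW n\<^esub> tau n i = tau n i \<otimes>\<^bsub>TW n\<^esub> tau n j"
proof -
  have "([] @ [j, i] @ [], [] @ [i, j] @ []) \<in> tw_step n"
    using assms by (intro tw_step_swap) auto
  then have "([j, i], [i, j]) \<in> tw_eq n" using assms by (intro tw_eq_step) auto
  then show ?thesis
    using assms equiv_class_eq[OF equiv_tw_eq] unfolding tau_def
    by (subst (1 2) TW_mult) (auto simp: tw_words_def)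
qed

lemma TW_generated: "carrier (TW n) = generate (TW n) (tau n ` {1..<n})"
proof
  interpret group "TW n" by (rule group_TW)
  have "tw_prod n w \<in> generate (TW n) (tau n ` {1..<n})" if "set w \<subseteq> {1..<n}" for w
    using that
  proof (induction w)
    case Nil
    then show ?case unfolding tw_prod_def by (simp add: generate.one)
  next
    case (Cons i w)
    then have "tau n i \<in> generate (TW n) (tau n ` {1..<n})" by (auto intro: generate.incl)
    with Cons show ?case unfolding tw_prod_def by (auto intro: generate.eng)
  qed
  then show "carrier (TW n) \<subseteq> generate (TW n) (tau n ` {1..<n})"
    unfolding TW_carrier tw_words_def using tw_prod_eq_class by (force simp: tw_words_def)
  show "generate (TW n) (tau n ` {1..<n}) \<subseteq> carrier (TW n)"
    using generate_in_carrier tau_closed by blast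
qed

locale twin_generated = group G for G (structure) +
  fixes t :: "nat \<Rightarrow> 'a" and n :: nat
  assumes t_closed: "i \<in> {1..<n} \<Longrightarrow> t i \<in> carrier G"
    and t_involution: "i \<in> {1..<n} \<Longrightarrow> t i \<otimes> t i = \<one>"
    and t_far_comm: "1 \<le> i \<Longrightarrow> i + 1 < j \<Longrightarrow> j < n \<Longrightarrow> t j \<otimes> t i = t i \<otimes> t j"
    and generated: "carrier G = generate G (t ` {1..<n})"
begin

declare t_closed [simp] t_involution [simp]

lemma t_inv [simp]: "i \<in> {1..<n} \<Longrightarrow> inv (t i) = t i"
  using inv_equality[OF t_involution] t_closed by blast

lemma t_cancel [simp]: "i \<in> {1..<n} \<Longrightarrow> x \<in> carrier G \<Longrightarrow> t i \<otimes> (t i \<otimes> x) = x"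
  by (simp add: m_assoc [symmetric])

lemma t_far_comm_left:
  "1 \<le> i \<Longrightarrow> i + 1 < j \<Longrightarrow> j < n \<Longrightarrow> x \<in> carrier G \<Longrightarrow>
   t j \<otimes> (t i \<otimes> x) = t i \<otimes> (t j \<otimes> x)"
  by (simp add: m_assoc [symmetric] t_far_comm)

definition word_prod :: "nat list \<Rightarrow> 'a" where
  "word_prod w = foldr (\<lambda>i x. t i \<otimes> x) w \<one>"

lemma word_prod_Nil [simp]: "word_prod [] = \<one>"
  by (simp add: word_prod_def)

lemma word_prod_Cons [simp]: "word_prod (i # w) = t i \<otimes> word_prod w"
  by (simp add: word_prod_def)

lemma word_prod_closed: "set w \<subseteq> {1..<n} \<Longrightarrow> word_prod w \<in> carrier G"
  by (induction w) auto

lemma word_prod_append: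
  "set u \<subseteq> {1..<n} \<Longrightarrow> set v \<subseteq> {1..<n} \<Longrightarrow> word_prod (u @ v) = word_prod u \<otimes> word_prod v"
  by (induction u) (auto simp: m_assoc word_prod_closed)

lemma word_prod_snoc:
  "set w \<subseteq> {1..<n} \<Longrightarrow> i \<in> {1..<n} \<Longrightarrow> word_prod (w @ [i]) = word_prod w \<otimes> t i"
  by (induction w) (auto simp: m_assoc word_prod_closed)

lemma t_comm_word_prod:
  assumes "set w \<subseteq> {1..<n}" "k \<in> {1..<n}" "\<And>i. i \<in> set w \<Longrightarrow> i + 1 < k \<or> k + 1 < i"
  shows "t k \<otimes> word_prod w = word_prod w \<otimes> t k"
  using assms
proof (induction w)
  case (Cons i w)
  have "i + 1 < k \<or> k + 1 < i" using Cons.prems(3) by simp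
  then have "t k \<otimes> t i = t i \<otimes> t k"
  proof
    assume "i + 1 < k"
    then show ?thesis using Cons.prems t_far_comm[of i k] by simp
  next
    assume "k + 1 < i"
    then show ?thesis using Cons.prems t_far_comm[of k i] by simp
  qed
  with Cons show ?case
    by (simp add: m_assoc [symmetric] word_prod_closed) (simp add: m_assoc word_prod_closed)
qed simp

text \<open>
  Since the generators are involutions, comm_gen j True and comm_gen j False are the commutators
  [t j, t (j+1)] and [t (j+1), t j].
\<close>

definition comm_gen :: "nat \<Rightarrow> bool \<Rightarrow> 'a" where
  "comm_gen j e =
    (if e then t j \<otimes> t (j+1) \<otimes> t j \<otimes> t (j+1) else t (j+1) \<otimes> t j \<otimes> t (j+1) \<otimes> t j)"

lemma comm_gen_word_prod:
  "1 \<le> j \<Longrightarrow> j + 1 < n \<Longrightarrow>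
   comm_gen j e = word_prod (if e then [j, j+1, j, j+1] else [j+1, j, j+1, j])"
  unfolding comm_gen_def by (simp add: m_assoc)

lemma comm_gen_closed: "1 \<le> j \<Longrightarrow> j + 1 < n \<Longrightarrow> comm_gen j e \<in> carrier G"
  unfolding comm_gen_def by simp

lemma comm_gen_conj_lower: "1 \<le> j \<Longrightarrow> j + 1 < n \<Longrightarrow> t j \<otimes> comm_gen j e \<otimes> t j = comm_gen j (\<not> e)"
  unfolding comm_gen_def by (simp add: m_assoc)

lemma comm_gen_conj_upper:
  "1 \<le> j \<Longrightarrow> j + 1 < n \<Longrightarrow> t (j+1) \<otimes> comm_gen j e \<otimes> t (j+1) = comm_gen j (\<not> e)"
  unfolding comm_gen_def by (simp add: m_assoc)

lemma comm_gen_conj_far: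
  assumes "1 \<le> j" "j + 3 \<le> k" "k < n"
  shows "t k \<otimes> comm_gen j e \<otimes> t k = comm_gen j e"
proof -
  define u where "u = (if e then [j, j+1, j, j+1] else [j+1, j, j+1, j])"
  have "set u = {j, j+1}" unfolding u_def by auto
  then have "t k \<otimes> word_prod u = word_prod u \<otimes> t k"
    using assms by (intro t_comm_word_prod) auto
  then have "t k \<otimes> comm_gen j e = comm_gen j e \<otimes> t k"
    using assms by (simp add: comm_gen_word_prod u_def)
  with assms show ?thesis by (simp add: m_assoc comm_gen_closed)
qed

lemma comm_gen_conj_two_above:
  assumes "1 \<le> j" "j + 2 < n"
  shows "t (j+2) \<otimes> comm_gen j True \<otimes> t (j+2)
      = (t j \<otimes> comm_gen (j+1) False \<otimes> t j) \<otimes> comm_gen j True \<otimes> comm_gen (j+1) True"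
    and "t (j+2) \<otimes> comm_gen j False \<otimes> t (j+2)
      = comm_gen (j+1) False \<otimes> comm_gen j False \<otimes> (t j \<otimes> comm_gen (j+1) True \<otimes> t j)"
  using assms unfolding comm_gen_def
  by (simp_all add: m_assoc t_far_comm t_far_comm_left)

lemma t_swap_adjacent:
  "1 \<le> j \<Longrightarrow> j + 1 < n \<Longrightarrow> t (j+1) \<otimes> t j = comm_gen j False \<otimes> (t j \<otimes> t (j+1))"
  unfolding comm_gen_def by (simp add: m_assoc)

definition conj_comm_gen :: "nat \<Rightarrow> nat list \<Rightarrow> bool \<Rightarrow> 'a" where
  "conj_comm_gen j w e = word_prod w \<otimes> comm_gen j e \<otimes> inv (word_prod w)"

definition admissible :: "nat \<Rightarrow> nat list \<Rightarrow> bool" where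
  "admissible j w \<longleftrightarrow> j \<in> {1..n-2} \<and> sorted_wrt (<) w \<and> set w \<subseteq> {1..<j}"

definition comm_gens :: "'a set" where
  "comm_gens = {conj_comm_gen j w e | j w e. admissible j w}"

abbreviation H :: "'a set" where
  "H \<equiv> generate G comm_gens"

lemma admissibleD:
  "admissible j w \<Longrightarrow> 1 \<le> j \<and> j + 1 < n \<and> sorted_wrt (<) w \<and> set w \<subseteq> {1..<j}"
  unfolding admissible_def by auto

lemma admissible_word: "admissible j w \<Longrightarrow> set w \<subseteq> {1..<n}"
  using admissibleD by fastforce

lemma conj_comm_gen_closed: "admissible j w \<Longrightarrow> conj_comm_gen j w e \<in> carrier G"
  unfolding conj_comm_gen_def
  using admissibleD admissible_word comm_gen_closed word_prod_closed by simp

lemma comm_gens_closed: "comm_gens \<subseteq> carrier G"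
  unfolding comm_gens_def using conj_comm_gen_closed by auto

lemma conj_comm_gen_in_H: "admissible j w \<Longrightarrow> conj_comm_gen j w e \<in> H"
  unfolding comm_gens_def by (rule generate.incl) blast

lemma H_subgroup: "subgroup H G"
  by (rule generate_is_subgroup[OF comm_gens_closed])

lemma H_carrier: "h \<in> H \<Longrightarrow> h \<in> carrier G"
  using generate_in_carrier[OF comm_gens_closed] by blast

lemma H_conj_closed: "D \<in> H \<Longrightarrow> h \<in> H \<Longrightarrow> D \<otimes> h \<otimes> inv D \<in> H"
  using H_subgroup by (meson subgroup.m_closed subgroup.m_inv_closed)

lemma conj_comm_gen_snoc:
  assumes "set w \<subseteq> {1..<n}" "i \<in> {1..<n}" "1 \<le> j" "j + 1 < n"
  shows "conj_comm_gen j (w @ [i]) e = word_prod w \<otimes> (t i \<otimes> comm_gen j e \<otimes> t i) \<otimes> inv (word_prod w)"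
  using assms unfolding conj_comm_gen_def
  by (simp add: word_prod_snoc word_prod_closed comm_gen_closed inv_mult_group m_assoc)

lemma t_mult_word_prod_below:
  assumes w: "sorted_wrt (<) w" "set w \<subseteq> {1..<k}" and k: "k \<in> {1..<n}"
  obtains D where "D \<in> H" "t k \<otimes> word_prod w = D \<otimes> word_prod (w @ [k])"
proof -
  have w_n: "set w \<subseteq> {1..<n}" using w k by auto
  consider (pred) w0 where "w = w0 @ [k - 1]" | (apart) "\<forall>i\<in>set w. i + 1 < k"
  proof (cases w rule: rev_cases)
    case (snoc w0 b)
    show ?thesis
    proof (cases "b = k - 1")
      case False
      with snoc w have "b + 1 < k" by auto
      with snoc w have "\<forall>i\<in>set w. i + 1 < k" by (auto simp: sorted_wrt_append)
      with that show ?thesis by blast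
    qed (use snoc that in blast)
  qed (use that in auto)
  then show ?thesis
  proof cases
    case pred
    obtain j where j: "k = j + 1" "1 \<le> j" using pred w by (cases k) auto
    have wj: "w = w0 @ [j]" using pred j by simp
    have w0: "set w0 \<subseteq> {1..<j}" "sorted_wrt (<) w0"
      using wj w j by (auto simp: sorted_wrt_append)
    then have w0_n: "set w0 \<subseteq> {1..<n}" using j k by auto
    have "admissible j w0" unfolding admissible_def using j k w0 by auto
    then have D: "conj_comm_gen j w0 False \<in> H" by (rule conj_comm_gen_in_H)
    have "t (j+1) \<otimes> word_prod w0 = word_prod w0 \<otimes> t (j+1)"
      using w0 j k by (intro t_comm_word_prod) auto
    then have "t (j+1) \<otimes> word_prod w = word_prod w0 \<otimes> (t (j+1) \<otimes> t j)"
      using wj w0_n j k by (simp add: word_prod_snoc m_assoc [symmetric] word_prod_closed)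
    also have "\<dots> = conj_comm_gen j w0 False \<otimes> word_prod (w @ [j+1])"
      using wj w0_n j k t_swap_adjacent[of j]
      by (simp add: conj_comm_gen_def word_prod_append word_prod_closed
          comm_gen_closed m_assoc)
    finally show ?thesis using D that unfolding j(1) by blast
  next
    case apart
    then have "t k \<otimes> word_prod w = word_prod w \<otimes> t k"
      using w_n k by (intro t_comm_word_prod) auto
    with w_n k show ?thesis using that[of \<one>] H_subgroup
      by (simp add: word_prod_snoc word_prod_closed subgroup.one_closed)
  qed
qed

lemma t_mult_word_prod_sorted:
  assumes "sorted_wrt (<) w" "set w \<subseteq> {1..<n}" "k \<in> {1..<n}"
  shows "\<exists>D\<in>H. \<exists>w'. t k \<otimes> word_prod w = D \<otimes> word_prod w'
           \<and> sorted_wrt (<) w' \<and> set w' \<subseteq> insert k (set w)"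
  using assms(1,2)
proof (induction w rule: rev_induct)
  case Nil
  have "t k \<otimes> word_prod [] = \<one> \<otimes> word_prod [k]" using assms(3) by simp
  then show ?case using subgroup.one_closed[OF H_subgroup] by fastforce
next
  case (snoc b w)
  have w: "sorted_wrt (<) w" "set w \<subseteq> {1..<n}" "\<forall>i\<in>set w. i < b" and b: "b \<in> {1..<n}"
    using snoc.prems by (auto simp: sorted_wrt_append)
  consider (below) "b < k" | (equal) "b = k" | (above) "k < b" by linarith
  then show ?case
  proof cases
    case below
    have "sorted_wrt (<) (w @ [b])" "set (w @ [b]) \<subseteq> {1..<k}"
      using snoc.prems w below by (auto simp: subset_iff)
    then obtain D where "D \<in> H" "t k \<otimes> word_prod (w @ [b]) = D \<otimes> word_prod ((w @ [b]) @ [k])"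
      by (rule t_mult_word_prod_below[OF _ _ assms(3)])
    moreover have "sorted_wrt (<) ((w @ [b]) @ [k])"
      using snoc.prems below w by (auto simp: sorted_wrt_append)
    moreover have "set ((w @ [b]) @ [k]) \<subseteq> insert k (set (w @ [b]))" by auto
    ultimately show ?thesis by blast
  next
    case equal
    have "set w \<subseteq> {1..<k}" using w equal by (auto simp: subset_iff)
    with w(1) obtain D where D: "D \<in> H" "t k \<otimes> word_prod w = D \<otimes> word_prod (w @ [k])"
      by (rule t_mult_word_prod_below[OF _ _ assms(3)])
    have "D \<in> carrier G" using D(1) by (rule H_carrier)
    then have "t k \<otimes> word_prod (w @ [b]) = D \<otimes> word_prod w"
      using D(2) equal w(2) b
      by (simp add: word_prod_snoc word_prod_closed m_assoc [symmetric])
        (simp add: m_assoc word_prod_closed)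
    moreover have "set w \<subseteq> insert k (set (w @ [b]))" by auto
    ultimately show ?thesis using D(1) w(1) by blast
  next
    case above
    then obtain D w' where D: "D \<in> H" "t k \<otimes> word_prod w = D \<otimes> word_prod w'"
      and w': "sorted_wrt (<) w'" "set w' \<subseteq> insert k (set w)"
      using snoc.IH w by blast
    have w'_n: "set w' \<subseteq> {1..<n}" using w' w assms(3) by auto
    have "D \<in> carrier G" using D(1) by (rule H_carrier)
    then have "t k \<otimes> word_prod (w @ [b]) = D \<otimes> word_prod (w' @ [b])"
      using D(2) b w w'_n assms(3)
      by (simp add: word_prod_snoc word_prod_closed m_assoc [symmetric])
    moreover have "sorted_wrt (<) (w' @ [b])" using w' w above by (auto simp: sorted_wrt_append)
    moreover have "set (w' @ [b]) \<subseteq> insert k (set (w @ [b]))" using w' by auto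
    ultimately show ?thesis using D(1) by blast
  qed
qed

lemma t_conj_conj_comm_gen:
  assumes "set w \<subseteq> {1..<n}" "set w' \<subseteq> {1..<n}" "k \<in> {1..<n}" "1 \<le> j" "j + 1 < n"
    and D: "D \<in> carrier G" "t k \<otimes> word_prod w = D \<otimes> word_prod w'"
  shows "t k \<otimes> conj_comm_gen j w e \<otimes> t k = D \<otimes> conj_comm_gen j w' e \<otimes> inv D"
proof -
  have closed: "word_prod w \<in> carrier G" "word_prod w' \<in> carrier G" "comm_gen j e \<in> carrier G"
    using word_prod_closed[OF assms(1)] word_prod_closed[OF assms(2)] comm_gen_closed[OF assms(4,5)]
    by auto
  have "t k \<otimes> conj_comm_gen j w e \<otimes> t k
      = t k \<otimes> (word_prod w \<otimes> comm_gen j e \<otimes> inv (word_prod w)) \<otimes> inv (t k)"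
    using assms(3) unfolding conj_comm_gen_def by simp
  also have "\<dots> = (t k \<otimes> word_prod w) \<otimes> comm_gen j e \<otimes> inv (t k \<otimes> word_prod w)"
    using assms(3) closed by (intro conj_conj) auto
  also have "\<dots> = (D \<otimes> word_prod w') \<otimes> comm_gen j e \<otimes> inv (D \<otimes> word_prod w')"
    unfolding D(2) ..
  also have "\<dots> = D \<otimes> conj_comm_gen j w' e \<otimes> inv D"
    using D(1) closed unfolding conj_comm_gen_def by (intro conj_conj [symmetric]) auto
  finally show ?thesis .
qed

lemma t_conj_comm_gen_in_H_below:
  assumes adm: "admissible j w" and k: "1 \<le> k" "k \<le> j"
  shows "t k \<otimes> conj_comm_gen j w e \<otimes> t k \<in> H"
proof -
  have j: "1 \<le> j" "j + 1 < n" and w: "sorted_wrt (<) w" "set w \<subseteq> {1..<j}"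
    using admissibleD[OF adm] by auto
  have w_n: "set w \<subseteq> {1..<n}" and k_n: "k \<in> {1..<n}" using w j k by auto
  show ?thesis
  proof (cases "k = j")
    case False
    then obtain D w' where D: "D \<in> H" "t k \<otimes> word_prod w = D \<otimes> word_prod w'"
      and w': "sorted_wrt (<) w'" "set w' \<subseteq> insert k (set w)"
      using t_mult_word_prod_sorted[OF w(1) w_n k_n] by blast
    have adm': "admissible j w'" using w' w k False adm unfolding admissible_def by auto
    have "D \<in> carrier G" using D(1) by (rule H_carrier)
    then have "t k \<otimes> conj_comm_gen j w e \<otimes> t k = D \<otimes> conj_comm_gen j w' e \<otimes> inv D"
      using t_conj_conj_comm_gen[OF w_n admissible_word[OF adm'] k_n j _ D(2)] by simp
    then show ?thesis using H_conj_closed[OF D(1) conj_comm_gen_in_H[OF adm']] by simp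
  next
    case True
    have "set w \<subseteq> {1..<k}" using w True by auto
    with w(1) obtain D where D: "D \<in> H" "t k \<otimes> word_prod w = D \<otimes> word_prod (w @ [k])"
      by (rule t_mult_word_prod_below[OF _ _ k_n])
    have "D \<in> carrier G" using D(1) by (rule H_carrier)
    then have "t k \<otimes> conj_comm_gen j w e \<otimes> t k = D \<otimes> conj_comm_gen j (w @ [j]) e \<otimes> inv D"
      using t_conj_conj_comm_gen[OF w_n _ k_n j _ D(2)] w_n k_n True by simp
    also have "conj_comm_gen j (w @ [j]) e = word_prod w \<otimes> comm_gen j (\<not> e) \<otimes> inv (word_prod w)"
      using w_n j by (simp add: conj_comm_gen_snoc comm_gen_conj_lower)
    also have "\<dots> = conj_comm_gen j w (\<not> e)"
      unfolding conj_comm_gen_def ..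
    finally show ?thesis using H_conj_closed[OF D(1) conj_comm_gen_in_H[OF adm]] by simp
  qed
qed

lemma t_conj_conj_comm_gen_commuting:
  assumes "set w \<subseteq> {1..<n}" "k \<in> {1..<n}" "1 \<le> j" "j + 1 < n"
    and commute: "t k \<otimes> word_prod w = word_prod w \<otimes> t k"
  shows "t k \<otimes> conj_comm_gen j w e \<otimes> t k
      = word_prod w \<otimes> (t k \<otimes> comm_gen j e \<otimes> t k) \<otimes> inv (word_prod w)"
proof -
  have closed: "word_prod w \<in> carrier G" "comm_gen j e \<in> carrier G" "t k \<in> carrier G"
    using assms by (auto simp: word_prod_closed comm_gen_closed)
  have "t k \<otimes> conj_comm_gen j w e \<otimes> t k
      = (t k \<otimes> word_prod w) \<otimes> comm_gen j e \<otimes> inv (t k \<otimes> word_prod w)"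
    using closed assms(2) unfolding conj_comm_gen_def by (simp add: conj_conj [symmetric])
  also have "\<dots> = (word_prod w \<otimes> t k) \<otimes> comm_gen j e \<otimes> inv (word_prod w \<otimes> t k)"
    unfolding commute ..
  also have "\<dots> = word_prod w \<otimes> (t k \<otimes> comm_gen j e \<otimes> t k) \<otimes> inv (word_prod w)"
    using closed assms(2) by (simp add: conj_conj [symmetric])
  finally show ?thesis .
qed

lemma conj_comm_gen_conj_two_above_in_H:
  assumes adm: "admissible j w" and j2: "j + 2 < n"
  shows "word_prod w \<otimes> (t (j+2) \<otimes> comm_gen j e \<otimes> t (j+2)) \<otimes> inv (word_prod w) \<in> H"
proof -
  have j: "1 \<le> j" and w_n: "set w \<subseteq> {1..<n}"
    using admissibleD[OF adm] admissible_word[OF adm] by auto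
  have adm1: "admissible (j+1) w" "admissible (j+1) (w @ [j])"
    using adm j2 unfolding admissible_def by (auto simp: sorted_wrt_append)
  have lift: "conj_comm_gen (j+1) (w @ [j]) e'
      = word_prod w \<otimes> (t j \<otimes> comm_gen (j+1) e' \<otimes> t j) \<otimes> inv (word_prod w)" for e'
    using w_n j j2 by (simp add: conj_comm_gen_snoc)
  have closed: "word_prod w \<in> carrier G" "t j \<in> carrier G"
      "comm_gen j e' \<in> carrier G" "comm_gen (j+1) e' \<in> carrier G" for e'
    using w_n j j2 by (auto simp: word_prod_closed comm_gen_closed)
  have H3: "a \<in> H \<Longrightarrow> b \<in> H \<Longrightarrow> c \<in> H \<Longrightarrow> a \<otimes> b \<otimes> c \<in> H" for a b c
    using H_subgroup by (meson subgroup.m_closed)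
  show ?thesis
  proof (cases e)
    case True
    then have "word_prod w \<otimes> (t (j+2) \<otimes> comm_gen j e \<otimes> t (j+2)) \<otimes> inv (word_prod w)
        = word_prod w \<otimes> ((t j \<otimes> comm_gen (j+1) False \<otimes> t j) \<otimes> comm_gen j True
            \<otimes> comm_gen (j+1) True) \<otimes> inv (word_prod w)"
      using comm_gen_conj_two_above(1)[OF j j2] by simp
    also have "\<dots> = conj_comm_gen (j+1) (w @ [j]) False \<otimes> conj_comm_gen j w True
        \<otimes> conj_comm_gen (j+1) w True"
      unfolding lift conj_comm_gen_def[of _ w] using closed by (intro conj_mult3) auto
    finally show ?thesis using H3 conj_comm_gen_in_H adm adm1 by simp
  next
    case False
    then have "word_prod w \<otimes> (t (j+2) \<otimes> comm_gen j e \<otimes> t (j+2)) \<otimes> inv (word_prod w)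
        = word_prod w \<otimes> (comm_gen (j+1) False \<otimes> comm_gen j False
            \<otimes> (t j \<otimes> comm_gen (j+1) True \<otimes> t j)) \<otimes> inv (word_prod w)"
      using comm_gen_conj_two_above(2)[OF j j2] by simp
    also have "\<dots> = conj_comm_gen (j+1) w False \<otimes> conj_comm_gen j w False
        \<otimes> conj_comm_gen (j+1) (w @ [j]) True"
      unfolding lift conj_comm_gen_def[of _ w] using closed by (intro conj_mult3) auto
    finally show ?thesis using H3 conj_comm_gen_in_H adm adm1 by simp
  qed
qed

lemma t_conj_comm_gen_in_H_above:
  assumes adm: "admissible j w" and k: "j < k" "k < n"
  shows "t k \<otimes> conj_comm_gen j w e \<otimes> t k \<in> H"
proof -
  have j: "1 \<le> j" "j + 1 < n" and w: "set w \<subseteq> {1..<j}"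
    using admissibleD[OF adm] by auto
  have w_n: "set w \<subseteq> {1..<n}" and k_n: "k \<in> {1..<n}" using w j k by auto
  have "t k \<otimes> word_prod w = word_prod w \<otimes> t k"
    using w_n k_n w k by (intro t_comm_word_prod) auto
  then have conj: "t k \<otimes> conj_comm_gen j w e \<otimes> t k
      = word_prod w \<otimes> (t k \<otimes> comm_gen j e \<otimes> t k) \<otimes> inv (word_prod w)"
    by (rule t_conj_conj_comm_gen_commuting[OF w_n k_n j])
  consider (adjacent) "k = j + 1" | (two) "k = j + 2" | (far) "j + 3 \<le> k" using k by linarith
  then show ?thesis
  proof cases
    case adjacent
    have "t k \<otimes> conj_comm_gen j w e \<otimes> t k = conj_comm_gen j w (\<not> e)"
      using conj unfolding adjacent comm_gen_conj_upper[OF j] conj_comm_gen_def[of j w "\<not> e"] .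
    then show ?thesis using conj_comm_gen_in_H[OF adm] by simp
  next
    case two
    then show ?thesis using conj conj_comm_gen_conj_two_above_in_H[OF adm] k by simp
  next
    case far
    have "t k \<otimes> conj_comm_gen j w e \<otimes> t k = conj_comm_gen j w e"
      using conj
      unfolding comm_gen_conj_far[OF j(1) far k(2)] conj_comm_gen_def[of j w e, symmetric] .
    then show ?thesis using conj_comm_gen_in_H[OF adm] by simp
  qed
qed

lemma H_normal: "H \<lhd> G"
proof (rule normal_generate_by_conjugation[OF comm_gens_closed _ generated])
  show "t ` {1..<n} \<subseteq> carrier G" by auto
  show "inv a \<in> t ` {1..<n}" if "a \<in> t ` {1..<n}" for a
    using that by auto
  show "a \<otimes> s \<otimes> inv a \<in> H" if "a \<in> t ` {1..<n}" "s \<in> comm_gens" for a s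
  proof -
    from that obtain k j w e
      where "a = t k" "k \<in> {1..<n}" "s = conj_comm_gen j w e" "admissible j w"
      unfolding comm_gens_def by blast
    note k = this
    have "t k \<otimes> conj_comm_gen j w e \<otimes> t k \<in> H"
    proof (cases "k \<le> j")
      case True
      then show ?thesis using k t_conj_comm_gen_in_H_below by auto
    next
      case False
      then show ?thesis using k t_conj_comm_gen_in_H_above by auto
    qed
    with k show ?thesis by simp
  qed
qed

lemma t_commutator_in_H:
  assumes a: "a \<in> {1..<n}" and b: "b \<in> {1..<n}"
  shows "t a \<otimes> t b \<otimes> inv (t a) \<otimes> inv (t b) \<in> H"
proof -
  have one: "\<one> \<in> H" using H_subgroup by (rule subgroup.one_closed)
  have "admissible j []" if "j \<in> {1..<n}" "j + 1 < n" for j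
    using that unfolding admissible_def by auto
  then have adj: "conj_comm_gen j [] e \<in> H" if "j \<in> {1..<n}" "j + 1 < n" for j e
    using that conj_comm_gen_in_H by blast
  consider "a = b" | "a + 1 < b" | "b + 1 < a" | "b = a + 1" | "a = b + 1" by linarith
  then show ?thesis
  proof cases
    case 1
    then show ?thesis using a one by (simp add: m_assoc)
  next
    case 2
    then show ?thesis
      using a b one t_far_comm[of a b] by (simp add: m_assoc [symmetric]) (simp add: m_assoc)
  next
    case 3
    then show ?thesis using a b one t_far_comm[of b a] by (simp add: m_assoc)
  next
    case 4
    then show ?thesis using a b adj[of a True] by (simp add: conj_comm_gen_def comm_gen_def)
  next
    case 5
    then show ?thesis using a b adj[of b False] by (simp add: conj_comm_gen_def comm_gen_def)
  qed
qed

lemma comm_gens_subset_derived: "comm_gens \<subseteq> derived G (carrier G)"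
proof
  fix s assume "s \<in> comm_gens"
  then obtain j w e where s: "s = conj_comm_gen j w e" and adm: "admissible j w"
    unfolding comm_gens_def by blast
  have j: "1 \<le> j" "j + 1 < n" and w_n: "set w \<subseteq> {1..<n}"
    using admissibleD[OF adm] admissible_word[OF adm] by auto
  have closed: "t j \<in> carrier G" "t (j+1) \<in> carrier G" using j by auto
  have "comm_gen j e \<in> derived G (carrier G)"
  proof (cases e)
    case True
    then have "comm_gen j e = t j \<otimes> t (j+1) \<otimes> inv (t j) \<otimes> inv (t (j+1))"
      using j by (simp add: comm_gen_def)
    then show ?thesis using commutator_in_derived[OF closed] by simp
  next
    case False
    then have "comm_gen j e = t (j+1) \<otimes> t j \<otimes> inv (t (j+1)) \<otimes> inv (t j)"
      using j by (simp add: comm_gen_def)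
    then show ?thesis using commutator_in_derived[OF closed(2,1)] by simp
  qed
  then show "s \<in> derived G (carrier G)"
    using normal.inv_op_closed2[OF derived_self_is_normal word_prod_closed[OF w_n]]
    unfolding s conj_comm_gen_def by blast
qed

theorem derived_eq_generate_comm_gens: "derived G (carrier G) = generate G comm_gens"
proof
  show "derived G (carrier G) \<subseteq> H"
    using t_commutator_in_H
    by (intro derived_subset_normal_of_generators[OF H_normal _ generated]) auto
  show "H \<subseteq> derived G (carrier G)"
    using generate_subgroup_incl[OF comm_gens_subset_derived derived_is_subgroup] by simp
qed

lemma comm_gens_eq:
  "comm_gens =
    {word_prod w \<otimes> (t j \<otimes> t (j+1) \<otimes> t j \<otimes> t (j+1)) \<otimes> inv (word_prod w)
      | j w. j \<in> {1..n-2} \<and> sorted_wrt (<) w \<and> set w \<subseteq> {1..<j}}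
    \<union> {word_prod w \<otimes> (t (j+1) \<otimes> t j \<otimes> t (j+1) \<otimes> t j) \<otimes> inv (word_prod w)
      | j w. j \<in> {1..n-2} \<and> sorted_wrt (<) w \<and> set w \<subseteq> {1..<j}}"
    (is "_ = ?A \<union> ?B")
proof (intro equalityI subsetI)
  fix s assume "s \<in> comm_gens"
  then obtain j w e where s: "s = conj_comm_gen j w e" and adm: "admissible j w"
    unfolding comm_gens_def by blast
  then have P: "j \<in> {1..n-2} \<and> sorted_wrt (<) w \<and> set w \<subseteq> {1..<j}"
    unfolding admissible_def by blast
  show "s \<in> ?A \<union> ?B"
  proof (cases e)
    case True
    then have "s = word_prod w \<otimes> (t j \<otimes> t (j+1) \<otimes> t j \<otimes> t (j+1)) \<otimes> inv (word_prod w)"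
      unfolding s conj_comm_gen_def comm_gen_def by simp
    with P show ?thesis by blast
  next
    case False
    then have "s = word_prod w \<otimes> (t (j+1) \<otimes> t j \<otimes> t (j+1) \<otimes> t j) \<otimes> inv (word_prod w)"
      unfolding s conj_comm_gen_def comm_gen_def by simp
    with P show ?thesis by blast
  qed
next
  fix s assume "s \<in> ?A \<union> ?B"
  then obtain j w e where "s = conj_comm_gen j w e" "admissible j w"
  proof (elim UnE CollectE exE conjE)
    fix j w assume "s = word_prod w \<otimes> (t j \<otimes> t (j+1) \<otimes> t j \<otimes> t (j+1)) \<otimes> inv (word_prod w)"
      "j \<in> {1..n-2}" "sorted_wrt (<) w" "set w \<subseteq> {1..<j}"
    then show thesis
      using that[of j w True] unfolding conj_comm_gen_def comm_gen_def admissible_def by simp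
  next
    fix j w assume "s = word_prod w \<otimes> (t (j+1) \<otimes> t j \<otimes> t (j+1) \<otimes> t j) \<otimes> inv (word_prod w)"
      "j \<in> {1..n-2}" "sorted_wrt (<) w" "set w \<subseteq> {1..<j}"
    then show thesis
      using that[of j w False] unfolding conj_comm_gen_def comm_gen_def admissible_def by simp
  qed
  then show "s \<in> comm_gens" unfolding comm_gens_def by blast
qed

end

theorem lemma2p1:
  fixes n :: nat
  assumes "n \<ge> 3"
  shows "derived (TW n) (carrier (TW n)) =
    generate (TW n)
      ({ tw_prod n w \<otimes>\<^bsub>TW n\<^esub>
           (tau n j \<otimes>\<^bsub>TW n\<^esub> tau n (j+1) \<otimes>\<^bsub>TW n\<^esub> tau n j \<otimes>\<^bsub>TW n\<^esub> tau n (j+1))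
         \<otimes>\<^bsub>TW n\<^esub> inv\<^bsub>TW n\<^esub> (tw_prod n w)
         | j w. j \<in> {1..n-2} \<and> sorted_wrt (<) w \<and> set w \<subseteq> {1..<j} }
     \<union> { tw_prod n w \<otimes>\<^bsub>TW n\<^esub>
           (tau n (j+1) \<otimes>\<^bsub>TW n\<^esub> tau n j \<otimes>\<^bsub>TW n\<^esub> tau n (j+1) \<otimes>\<^bsub>TW n\<^esub> tau n j)
         \<otimes>\<^bsub>TW n\<^esub> inv\<^bsub>TW n\<^esub> (tw_prod n w)
         | j w. j \<in> {1..n-2} \<and> sorted_wrt (<) w \<and> set w \<subseteq> {1..<j} })"
proof -
  interpret twin_generated "TW n" "tau n" n
    using group_TW tau_closed tau_involution tau_far_comm TW_generated
    by (intro twin_generated.intro twin_generated_axioms.intro) auto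
  have "word_prod = tw_prod n"
    by (simp add: fun_eq_iff word_prod_def tw_prod_def)
  then show ?thesis
    using derived_eq_generate_comm_gens unfolding comm_gens_eq by simp
qed

end
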